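(* The $\mathbf k$-linear map $\varphi:\mathrm{WCQSym}\to\mathrm{QSym}$ defined on the basis by $\varphi(M_\alpha)=(-1)^{\ell_\varepsilon(\alpha)}M_{\bar\alpha}$ if $\alpha\in\mathcal C_N$ and $\varphi(M_\alpha)=0$ if $\alpha\in\mathcal C_\varepsilon$ is a surjective Hopf algebra homomorphism.
   Context: $\mathbf{k}$ is a commutative ring containing $\mathbb{Q}$. $\tilde{\mathbb N}=\mathbb N\cup\{\varepsilon\}$ with $0+\varepsilon=\varepsilon+\varepsilon=\varepsilon$ and $n+\varepsilon=n$ for integers $n\ge1$. $\mathbf{k}[[X]]_{\tilde{\mathbb N}}$, $X=\{x_1<x_2<\cdots\}$, is the algebra of possibly infinite linear combinations of formal monomials $\prod x_i^{f(x_i)}$, $f$ finitely supported $\tilde{\mathbb N}$-valued, $x^0=1$, multiplied by adding exponents in $\tilde{\mathbb N}$. An $\tilde{\mathbb N}$-composition is a finite (possibly empty) sequence $\alpha=(\alpha_1,\dots,\alpha_k)$ of elements of $\{\varepsilon,1,2,\dots\}$, $\ell(\alpha)=k$; $M_\alpha=\sum_{1\le i_1<\cdots<i_k}x_{i_1}^{\alpha_1}\cdots x_{i_k}^{\alpha_k}$, $M_\emptyset=1$. $\mathrm{WCQSym}$ is the $\mathbf k$-span of the (linearly independent) $M_\alpha$; it is a Hopf algebra with the power series product, coproduct $\Delta(M_{(\alpha_1,\dots,\alpha_k)})=\sum_{i=0}^kM_{(\alpha_1,\dots,\alpha_i)}\otimes M_{(\alpha_{i+1},\dots,\alpha_k)}$,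 counit $\epsilon(M_\alpha)=\delta_{\alpha,\emptyset}$, and antipode $S(M_\alpha)=(-1)^{\ell(\alpha)}\sum_{J\models\ell(\alpha)}M_{J\circ\alpha^r}$ (here $\alpha^r$ is the reversal, and for $J=(j_1,\dots,j_l)$ a sequence of positive integers summing to $\ell(\gamma)$, $J\circ\gamma$ sums consecutive blocks of $\gamma$ of sizes $j_1,\dots,j_l$ in $\tilde{\mathbb N}$). $\mathrm{QSym}$ is the span of the $M_\alpha$ with all entries positive integers, a Hopf algebra with the same formulas. $\ell_\varepsilon(\alpha)$ is the number of entries equal to $\varepsilon$; $\bar\alpha$ is $\alpha$ with its $\varepsilon$ entries deleted. $\mathcal C_\varepsilon$ is the set of $\tilde{\mathbb N}$-compositions whose first entry is $\varepsilon$; $\mathcal C_N$ is the set of all other $\tilde{\mathbb N}$-compositions (the empty one and those whose first entry is a positive integer). *)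

theory Defs
  imports Main
begin

text \<open>The extended monoid N~ = N \<union> {eps}.  NN n is the integer n, Eps is eps.\<close>
datatype ntil = Eps | NN nat

fun tadd :: "ntil \<Rightarrow> ntil \<Rightarrow> ntil" where
  "tadd (NN a) (NN b) = NN (a + b)"
| "tadd (NN n) Eps = (if n = 0 then Eps else NN n)"
| "tadd Eps (NN n) = (if n = 0 then Eps else NN n)"
| "tadd Eps Eps = Eps"

definition is_comp :: "ntil list \<Rightarrow> bool" where
  "is_comp \<alpha> \<longleftrightarrow> (\<forall>x\<in>set \<alpha>. x \<noteq> NN 0)"

text \<open>Ordinary compositions (all entries positive integers), indexing the basis of QSym.\<close>
definition is_qcomp :: "ntil list \<Rightarrow> bool" where
  "is_qcomp \<alpha> \<longleftrightarrow> is_comp \<alpha> \<and> Eps \<notin> set \<alpha>"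

definition in_C_eps :: "ntil list \<Rightarrow> bool" where
  "in_C_eps \<alpha> \<longleftrightarrow> \<alpha> \<noteq> [] \<and> hd \<alpha> = Eps"

definition in_C_N :: "ntil list \<Rightarrow> bool" where
  "in_C_N \<alpha> \<longleftrightarrow> is_comp \<alpha> \<and> \<not> in_C_eps \<alpha>"

definition ell_eps :: "ntil list \<Rightarrow> nat" where
  "ell_eps \<alpha> = length (filter (\<lambda>x. x = Eps) \<alpha>)"

definition bar :: "ntil list \<Rightarrow> ntil list" where
  "bar \<alpha> = filter (\<lambda>x. x \<noteq> Eps) \<alpha>"

text \<open>Formal monomials: exponent functions on the variables x_0 < x_1 < ... (indexed by nat),
  finitely supported.  Power series: coefficient functions on monomials.\<close>
type_synonym mono = "nat \<Rightarrow> ntil"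
type_synonym 'k pser = "mono \<Rightarrow> 'k"

definition fin_mono :: "mono \<Rightarrow> bool" where
  "fin_mono f \<longleftrightarrow> finite {i. f i \<noteq> NN 0}"

text \<open>expo [i1,...,ik] [a1,...,ak] is the exponent function of x_{i1}^{a1} ... x_{ik}^{ak}
  (for distinct indices).\<close>
fun expo :: "nat list \<Rightarrow> ntil list \<Rightarrow> mono" where
  "expo (i # is) (a # as) = (expo is as)(i := a)"
| "expo _ _ = (\<lambda>_. NN 0)"

text \<open>Monomial quasisymmetric function M_alpha as a power series: the coefficient of a monomial
  is the number of index tuples i1 < ... < ik producing it.\<close>
definition Mser :: "ntil list \<Rightarrow> 'k::comm_ring_1 pser" where
  "Mser \<alpha> f = of_nat (card {is. sorted_wrt (<) is \<and> length is = length \<alpha> \<and> expo is \<alpha> = f})"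

definition ps_mult :: "'k::comm_ring_1 pser \<Rightarrow> 'k pser \<Rightarrow> 'k pser" where
  "ps_mult p q f = (\<Sum>(g, h) \<in> {(g, h). fin_mono g \<and> fin_mono h \<and> (\<forall>i. f i = tadd (g i) (h i))}.
                       p g * q h)"

text \<open>Elements of WCQSym (resp. QSym) are represented by their (finitely supported) coordinate
  vectors with respect to the basis (M_alpha); this is faithful since the M_alpha are linearly
  independent.  The same for the tensor square, with basis M_alpha (x) M_beta.\<close>
definition supp :: "('a \<Rightarrow> 'k::zero) \<Rightarrow> 'a set" where
  "supp a = {x. a x \<noteq> 0}"

definition Wvec :: "(ntil list \<Rightarrow> 'k::comm_ring_1) set" where
  "Wvec = {a. finite (supp a) \<and> (\<forall>\<alpha>. a \<alpha> \<noteq> 0 \<longrightarrow> is_comp \<alpha>)}"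

definition Qvec :: "(ntil list \<Rightarrow> 'k::comm_ring_1) set" where
  "Qvec = {a. finite (supp a) \<and> (\<forall>\<alpha>. a \<alpha> \<noteq> 0 \<longrightarrow> is_qcomp \<alpha>)}"

definition realize :: "(ntil list \<Rightarrow> 'k::comm_ring_1) \<Rightarrow> 'k pser" where
  "realize a f = (\<Sum>\<alpha>\<in>supp a. a \<alpha> * Mser \<alpha> f)"

definition unit_vec :: "ntil list \<Rightarrow> 'k::comm_ring_1" where
  "unit_vec \<alpha> = (if \<alpha> = [] then 1 else 0)"

definition counit :: "(ntil list \<Rightarrow> 'k::comm_ring_1) \<Rightarrow> 'k" where
  "counit a = (\<Sum>\<alpha>\<in>supp a. a \<alpha> * (if \<alpha> = [] then 1 else 0))"

text \<open>Coproduct Delta(M_alpha) = sum_i M_(alpha_1..alpha_i) (x) M_(alpha_{i+1}..alpha_k),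
  extended linearly; result as coordinates w.r.t. the basis M_beta (x) M_gamma.\<close>
definition coprod :: "(ntil list \<Rightarrow> 'k::comm_ring_1) \<Rightarrow> (ntil list \<times> ntil list \<Rightarrow> 'k)" where
  "coprod a = (\<lambda>(\<beta>, \<gamma>). \<Sum>\<alpha>\<in>supp a. a \<alpha> *
       of_nat (card {i. i \<le> length \<alpha> \<and> take i \<alpha> = \<beta> \<and> drop i \<alpha> = \<gamma>}))"

definition tsum :: "ntil list \<Rightarrow> ntil" where
  "tsum xs = foldr tadd xs (NN 0)"

fun blocks :: "nat list \<Rightarrow> ntil list \<Rightarrow> ntil list" where
  "blocks [] _ = []"
| "blocks (j # J) \<gamma> = tsum (take j \<gamma>) # blocks J (drop j \<gamma>)"

definition ncomps :: "nat \<Rightarrow> nat list set" where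
  "ncomps n = {J. (\<forall>j\<in>set J. 0 < j) \<and> sum_list J = n}"

text \<open>Antipode S(M_alpha) = (-1)^l(alpha) sum_{J |= l(alpha)} M_{J o alpha^r}, extended linearly.\<close>
definition antipode :: "(ntil list \<Rightarrow> 'k::comm_ring_1) \<Rightarrow> (ntil list \<Rightarrow> 'k)" where
  "antipode a = (\<lambda>\<beta>. \<Sum>\<alpha>\<in>supp a. a \<alpha> * (-1) ^ length \<alpha> *
       of_nat (card {J \<in> ncomps (length \<alpha>). blocks J (rev \<alpha>) = \<beta>}))"

definition phi_basis :: "ntil list \<Rightarrow> ntil list \<Rightarrow> 'k::comm_ring_1" where
  "phi_basis \<alpha> \<beta> = (if in_C_N \<alpha> \<and> \<beta> = bar \<alpha> then (-1) ^ ell_eps \<alpha> else 0)"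

definition phi :: "(ntil list \<Rightarrow> 'k::comm_ring_1) \<Rightarrow> (ntil list \<Rightarrow> 'k)" where
  "phi a = (\<lambda>\<beta>. \<Sum>\<alpha>\<in>supp a. a \<alpha> * phi_basis \<alpha> \<beta>)"

definition phi2 :: "(ntil list \<times> ntil list \<Rightarrow> 'k::comm_ring_1) \<Rightarrow> (ntil list \<times> ntil list \<Rightarrow> 'k)" where
  "phi2 d = (\<lambda>(\<beta>', \<gamma>'). \<Sum>(\<beta>, \<gamma>)\<in>supp d. d (\<beta>, \<gamma>) * phi_basis \<beta> \<beta>' * phi_basis \<gamma> \<gamma>')"

end

theory Submission
  imports Defs
begin

text \<open>
  Write \<open>\<psi>(M_a) = (-1)^ell_eps a M_(bar a)\<close> for every composition; then \<open>\<phi>\<close> is \<open>\<psi>\<close> followed by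
  killing \<open>C_eps\<close>. In coordinates, the coproduct, the product and the antipode are sums over
  deconcatenations, quasi-shuffles and coarsenings of \<open>rev a\<close>, respectively. Applying \<open>\<phi>\<close> to these
  sums, the terms starting with \<open>Eps\<close> either vanish or cancel in pairs, because a leading \<open>Eps\<close>
  contributes the same term with opposite signs whether it stands alone or is merged into its
  neighbour (\<open>Eps + n = n\<close>); the surviving terms are the corresponding sums for \<open>bar a\<close>, with
  the sign \<open>(-1)^ell_eps a\<close>. Since \<open>\<phi>\<close> is the identity on \<open>QSym\<close>, it is surjective.
\<close>

lemma tadd_assoc: "tadd (tadd x y) z = tadd x (tadd y z)"
  by (cases x; cases y; cases z) auto

lemma tadd_NN0_left [simp]: "tadd (NN 0) x = x"
  by (cases x) auto

lemma tadd_NN0_right [simp]: "tadd x (NN 0) = x"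
  by (cases x) auto

lemma tadd_eq_NN0_iff: "tadd x y = NN 0 \<longleftrightarrow> x = NN 0 \<and> y = NN 0"
  by (cases x; cases y) auto

lemma NN0_eq_tadd_iff: "NN 0 = tadd x y \<longleftrightarrow> x = NN 0 \<and> y = NN 0"
  by (cases x; cases y) auto

lemma tadd_Eps_left: "y \<noteq> NN 0 \<Longrightarrow> tadd Eps y = y"
  by (cases y) auto

lemma tadd_Eps_right: "y \<noteq> NN 0 \<Longrightarrow> tadd y Eps = y"
  by (cases y) auto

lemma tadd_NN_neq_Eps: "n \<noteq> 0 \<Longrightarrow> tadd (NN n) z \<noteq> Eps"
  by (cases z) auto

lemma tsum_simps [simp]: "tsum [] = NN 0" "tsum (x # xs) = tadd x (tsum xs)"
  by (auto simp: tsum_def)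

lemma is_comp_simps [simp]: "is_comp []" "is_comp (x # a) \<longleftrightarrow> x \<noteq> NN 0 \<and> is_comp a"
  by (auto simp: is_comp_def)

lemma is_comp_rev [simp]: "is_comp (rev a) \<longleftrightarrow> is_comp a"
  by (simp add: is_comp_def)

lemma bar_simps [simp]: "bar [] = []" "bar (Eps # a) = bar a" "bar (NN n # a) = NN n # bar a"
  by (auto simp: bar_def)

lemma bar_rev: "bar (rev a) = rev (bar a)"
  by (simp add: bar_def rev_filter)

lemma length_eq_ell_eps_plus_length_bar: "length a = ell_eps a + length (bar a)"
  unfolding ell_eps_def bar_def using sum_length_filter_compl[of "\<lambda>x. x = Eps" a] by simp

definition eps_sign :: "ntil list \<Rightarrow> 'k::comm_ring_1" where
  "eps_sign a = (-1) ^ ell_eps a"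

lemma eps_sign_simps [simp]: "eps_sign [] = 1" "eps_sign (Eps # a) = - eps_sign a" "eps_sign (NN n # a) = eps_sign a"
  by (auto simp: eps_sign_def ell_eps_def)

text \<open>\<open>psi_basis\<close> is \<open>phi_basis\<close> without the truncation to \<open>C_N\<close>: it sends every \<open>M_a\<close> to
  \<open>(-1)^ell_eps a M_(bar a)\<close>, and unlike \<open>phi_basis\<close> it is compatible with prepending an entry.\<close>
fun psi_basis :: "ntil list \<Rightarrow> ntil list \<Rightarrow> 'k::comm_ring_1" where
  "psi_basis [] b = (if b = [] then 1 else 0)"
| "psi_basis (Eps # a) b = - psi_basis a b"
| "psi_basis (NN n # a) b =
     (if n = 0 then 0 else case b of [] \<Rightarrow> 0 | c # b' \<Rightarrow> if c = NN n then psi_basis a b' else 0)"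

lemma psi_basis_eq: "psi_basis a b = (if is_comp a \<and> b = bar a then eps_sign a else 0)"
proof (induction a arbitrary: b)
  case (Cons x a)
  then show ?case
    by (cases x) (auto split: list.splits)
qed simp

lemma phi_basis_eq_psi_basis: "phi_basis a b = (if a \<noteq> [] \<and> hd a = Eps then 0 else psi_basis a b)"
  by (auto simp: phi_basis_def psi_basis_eq in_C_N_def in_C_eps_def eps_sign_def)

lemma phi_basis_Cons: "phi_basis (x # a) b = (if x = Eps then 0 else psi_basis (x # a) b)"
  by (simp add: phi_basis_eq_psi_basis)

definition phi_coeff :: "ntil list \<Rightarrow> 'k::comm_ring_1" where
  "phi_coeff a = (if a \<noteq> [] \<and> hd a = Eps then 0 else eps_sign a)"

lemma phi_basis_comp: "is_comp a \<Longrightarrow> phi_basis a b = (if b = bar a then phi_coeff a else 0)"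
  by (simp add: phi_basis_eq_psi_basis psi_basis_eq phi_coeff_def)

lemma phi_basis_qcomp:
  assumes "is_qcomp a"
  shows "phi_basis a b = (if b = a then 1 else 0)"
proof -
  have comp: "is_comp a" and no_eps: "Eps \<notin> set a"
    using assms by (auto simp: is_qcomp_def)
  then have "filter (\<lambda>x. x = Eps) a = []" "filter (\<lambda>x. x \<noteq> Eps) a = a"
    by (auto simp: filter_empty_conv filter_id_conv)
  then have "bar a = a" "eps_sign a = 1"
    by (simp_all add: bar_def eps_sign_def ell_eps_def)
  moreover have "\<not> (a \<noteq> [] \<and> hd a = Eps)"
    using no_eps hd_in_set by metis
  ultimately show ?thesis
    using comp by (auto simp: phi_basis_comp phi_coeff_def)
qed

lemma phi_basis_Nil: "phi_basis a [] = (if a = [] then 1 else 0)"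
proof (cases a)
  case (Cons x a')
  then show ?thesis
    by (cases x) (auto simp: phi_basis_eq_psi_basis psi_basis_eq)
qed (simp add: phi_basis_eq_psi_basis)

lemma Wvec_finite_supp: "a \<in> Wvec \<Longrightarrow> finite (supp a)"
  by (simp add: Wvec_def)

lemma Wvec_supp_is_comp: "a \<in> Wvec \<Longrightarrow> x \<in> supp a \<Longrightarrow> is_comp x"
  by (auto simp: Wvec_def supp_def)

lemma Qvec_subset_Wvec: "Qvec \<subseteq> Wvec"
  by (auto simp: Qvec_def Wvec_def is_qcomp_def)

lemma sum_supp_superset:
  "finite S \<Longrightarrow> supp v \<subseteq> S \<Longrightarrow> (\<Sum>x\<in>supp v. v x * K x) = (\<Sum>x\<in>S. v x * (K x :: 'k::comm_ring_1))"
  by (rule sum.mono_neutral_left) (auto simp: supp_def)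

lemma sum_supp_delta: "finite (supp v) \<Longrightarrow> (\<Sum>x\<in>supp v. if x = y then v x else 0) = v y"
  by (simp add: sum.delta' supp_def)

lemma supp_phi: "supp (phi a) \<subseteq> bar ` supp a"
proof
  fix b assume "b \<in> supp (phi a)"
  then have "(\<Sum>x\<in>supp a. a x * phi_basis x b) \<noteq> 0"
    by (simp add: supp_def phi_def)
  then obtain x where "x \<in> supp a" "a x * phi_basis x b \<noteq> 0"
    by (meson sum.not_neutral_contains_not_neutral)
  then show "b \<in> bar ` supp a"
    unfolding phi_basis_def by (metis image_eqI mult_zero_right)
qed

lemma sum_supp_phi:
  assumes "a \<in> Wvec"
  shows "(\<Sum>y\<in>supp (phi a). phi a y * K y) = (\<Sum>x\<in>supp a. a x * phi_coeff x * K (bar x))"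
proof -
  have fin: "finite (supp a)"
    using assms by (rule Wvec_finite_supp)
  have "(\<Sum>y\<in>supp (phi a). phi a y * K y) = (\<Sum>y\<in>bar ` supp a. phi a y * K y)"
    using fin supp_phi by (intro sum_supp_superset) auto
  also have "\<dots> = (\<Sum>x\<in>supp a. \<Sum>y\<in>bar ` supp a. a x * phi_basis x y * K y)"
    by (simp add: phi_def sum_distrib_right sum.swap[of _ "bar ` supp a"])
  also have "\<dots> = (\<Sum>x\<in>supp a. a x * phi_coeff x * K (bar x))"
  proof (rule sum.cong[OF refl])
    fix x assume x: "x \<in> supp a"
    have "(\<Sum>y\<in>bar ` supp a. a x * phi_basis x y * K y)
        = (\<Sum>y\<in>bar ` supp a. if y = bar x then a x * phi_coeff x * K (bar x) else 0)"
      using Wvec_supp_is_comp[OF assms x] by (intro sum.cong) (auto simp: phi_basis_comp)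
    also have "\<dots> = a x * phi_coeff x * K (bar x)"
      using fin x by (simp add: sum.delta)
    finally show "(\<Sum>y\<in>bar ` supp a. a x * phi_basis x y * K y) = a x * phi_coeff x * K (bar x)" .
  qed
  finally show ?thesis .
qed

lemma sum_list_map_uminus [simp]: "(\<Sum>x\<leftarrow>xs. - f x) = - (\<Sum>x\<leftarrow>xs. f x :: 'a::ab_group_add)"
  by (induction xs) simp_all

lemma sum_list_map_if_const [simp]:
  "(\<Sum>x\<leftarrow>xs. if P then f x else 0) = (if P then (\<Sum>x\<leftarrow>xs. f x) else (0::'a::comm_monoid_add))"
  by (induction xs) simp_all

lemma sum_of_nat_count_list:
  "finite D \<Longrightarrow> set xs \<subseteq> D \<Longrightarrow> (\<Sum>d\<in>D. of_nat (count_list xs d) * F d) = (\<Sum>d\<leftarrow>xs. F d :: 'k::comm_semiring_1)"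
proof (induction xs)
  case (Cons y xs)
  have "(\<Sum>d\<in>D. of_nat (count_list (y # xs) d) * F d)
      = (\<Sum>d\<in>D. if y = d then F d else 0) + (\<Sum>d\<in>D. of_nat (count_list xs d) * F d)"
    by (subst sum.distrib[symmetric], rule sum.cong) (auto simp: distrib_right)
  with Cons show ?case
    by (simp add: sum.delta)
qed simp

lemma supp_count_list_combination:
  "supp (\<lambda>d. \<Sum>x\<in>A. w x * of_nat (count_list (L x) d)) \<subseteq> (\<Union>x\<in>A. set (L x))"
proof
  fix d assume "d \<in> supp (\<lambda>d. \<Sum>x\<in>A. w x * of_nat (count_list (L x) d))"
  then have "(\<Sum>x\<in>A. w x * of_nat (count_list (L x) d)) \<noteq> 0"
    by (simp add: supp_def)
  then obtain x where "x \<in> A" "w x * of_nat (count_list (L x) d) \<noteq> 0"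
    by (meson sum.not_neutral_contains_not_neutral)
  then show "d \<in> (\<Union>x\<in>A. set (L x))"
    by (metis UN_iff count_notin mult_zero_right of_nat_0)
qed

text \<open>Both the quasi-shuffle product and the antipode have coordinates of this form.\<close>
lemma phi_count_list_combination:
  assumes "finite A"
  shows "phi (\<lambda>d. \<Sum>x\<in>A. w x * of_nat (count_list (L x) d)) b = (\<Sum>x\<in>A. w x * (\<Sum>d\<leftarrow>L x. phi_basis d b))"
proof -
  define v where "v = (\<lambda>d. \<Sum>x\<in>A. w x * of_nat (count_list (L x) d))"
  define D where "D = (\<Union>x\<in>A. set (L x))"
  have D: "finite D" "\<And>x. x \<in> A \<Longrightarrow> set (L x) \<subseteq> D"
    using assms by (auto simp: D_def)
  have "supp v \<subseteq> D"
    unfolding v_def D_def by (rule supp_count_list_combination)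
  then have "phi v b = (\<Sum>d\<in>D. v d * phi_basis d b)"
    unfolding phi_def using D(1) by (intro sum_supp_superset)
  also have "\<dots> = (\<Sum>x\<in>A. w x * (\<Sum>d\<in>D. of_nat (count_list (L x) d) * phi_basis d b))"
    by (simp add: v_def sum_distrib_right sum_distrib_left mult.assoc sum.swap[of _ D])
  also have "\<dots> = (\<Sum>x\<in>A. w x * (\<Sum>d\<leftarrow>L x. phi_basis d b))"
    using D by (simp add: sum_of_nat_count_list)
  finally show ?thesis
    by (simp add: v_def)
qed

lemma phi_in_Qvec:
  assumes "a \<in> Wvec"
  shows "phi a \<in> Qvec"
proof -
  have "is_qcomp b" if "phi a b \<noteq> 0" for b
  proof -
    from that have "b \<in> bar ` supp a"
      using supp_phi unfolding supp_def by blast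
    then obtain x where x: "x \<in> supp a" "b = bar x"
      by blast
    then show ?thesis
      using Wvec_supp_is_comp[OF assms] by (auto simp: is_qcomp_def is_comp_def bar_def)
  qed
  moreover have "finite (supp (phi a))"
    by (rule finite_subset[OF supp_phi finite_imageI[OF Wvec_finite_supp[OF assms]]])
  ultimately show ?thesis
    by (simp add: Qvec_def)
qed

lemma phi_Qvec_id:
  assumes "q \<in> Qvec"
  shows "phi q = q"
proof
  fix b
  have "phi q b = (\<Sum>x\<in>supp q. if x = b then q x else 0)"
    using assms unfolding phi_def by (intro sum.cong) (auto simp: phi_basis_qcomp Qvec_def supp_def)
  also have "\<dots> = q b"
    using assms by (intro sum_supp_delta) (simp add: Qvec_def)
  finally show "phi q b = q b" .
qed

lemma phi_unit_vec: "phi unit_vec = unit_vec"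
proof
  fix b
  have supp_unit: "supp unit_vec = {[]}"
    by (auto simp: supp_def unit_vec_def)
  show "phi unit_vec b = unit_vec b"
    unfolding phi_def supp_unit by (simp add: unit_vec_def phi_basis_eq_psi_basis)
qed

lemma counit_eq: "finite (supp v) \<Longrightarrow> counit v = v []"
  unfolding counit_def by (simp add: sum.delta' supp_def if_distrib cong: if_cong)

lemma counit_phi:
  assumes "a \<in> Wvec"
  shows "counit (phi a) = counit a"
proof -
  have "phi a [] = (\<Sum>x\<in>supp a. if x = [] then a x else 0)"
    unfolding phi_def by (intro sum.cong) (auto simp: phi_basis_Nil)
  also have "\<dots> = a []"
    using assms by (intro sum_supp_delta Wvec_finite_supp)
  finally show ?thesis
    using phi_in_Qvec[OF assms] assms by (simp add: counit_eq Qvec_def Wvec_finite_supp)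
qed

section \<open>Coproduct\<close>

lemma psi_basis_deconcat:
  "(\<Sum>i\<le>length a. psi_basis (take i a) b * phi_basis (drop i a) c) = psi_basis a (b @ c)"
proof (induction a arbitrary: b c)
  case Nil
  then show ?case by (simp add: phi_basis_eq_psi_basis)
next
  case (Cons x a)
  have split: "(\<Sum>i\<le>length (x # a). psi_basis (take i (x # a)) b * phi_basis (drop i (x # a)) c)
      = psi_basis [] b * phi_basis (x # a) c
        + (\<Sum>i\<le>length a. psi_basis (x # take i a) b * phi_basis (drop i a) c)"
    by (simp only: length_Cons sum.atMost_Suc_shift) simp
  show ?case
  proof (cases x)
    case Eps
    then show ?thesis
      unfolding split using Cons.IH[of b c] by (simp add: phi_basis_Cons sum_negf)
  next
    case (NN n)
    show ?thesis
    proof (cases "n = 0 \<or> b = []")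
      case True
      then show ?thesis
        unfolding split using NN by (auto simp: phi_basis_Cons psi_basis_eq)
    next
      case False
      then obtain y b' where "b = y # b'"
        by (cases b) auto
      then show ?thesis
        unfolding split using NN False Cons.IH[of b' c] by (auto simp: sum_distrib_left)
    qed
  qed
qed

text \<open>Only the first factor can start with \<open>Eps\<close>, and then both sides vanish.\<close>
lemma phi_basis_deconcat:
  "(\<Sum>i\<le>length a. phi_basis (take i a) b * phi_basis (drop i a) c) = phi_basis a (b @ c)"
proof (cases "a \<noteq> [] \<and> hd a = Eps")
  case True
  then obtain a' where a: "a = Eps # a'"
    by (cases a) auto
  show ?thesis
    unfolding a by (simp only: length_Cons sum.atMost_Suc_shift) (simp add: phi_basis_Cons)
next
  case False
  then have take_eq: "phi_basis (take i a) b = psi_basis (take i a) b" for i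
    by (cases a; cases i) (auto simp: phi_basis_eq_psi_basis)
  have "(\<Sum>i\<le>length a. phi_basis (take i a) b * phi_basis (drop i a) c)
      = (\<Sum>i\<le>length a. psi_basis (take i a) b * phi_basis (drop i a) c)"
    by (simp only: take_eq)
  also have "\<dots> = psi_basis a (b @ c)"
    by (rule psi_basis_deconcat)
  also have "\<dots> = phi_basis a (b @ c)"
    using False by (auto simp: phi_basis_eq_psi_basis)
  finally show ?thesis .
qed

lemma card_deconcat:
  "card {i. i \<le> length x \<and> take i x = b \<and> drop i x = c} = (if x = b @ c then 1 else 0)"
proof -
  have "{i. i \<le> length x \<and> take i x = b \<and> drop i x = c} = (if x = b @ c then {length b} else {})"
    by (auto simp: append_eq_conv_conj dest: arg_cong[of _ _ length])
  then show ?thesis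
    by simp
qed

lemma coprod_apply: "finite (supp a) \<Longrightarrow> coprod a (b, c) = a (b @ c)"
  unfolding coprod_def by (simp add: card_deconcat sum.delta' supp_def if_distrib cong: if_cong)

lemma supp_coprod:
  assumes "finite (supp a)"
  shows "supp (coprod a) = (\<lambda>(x, i). (take i x, drop i x)) ` (SIGMA x:supp a. {..length x})"
proof (intro equalityI subsetI)
  fix q assume "q \<in> supp (coprod a)"
  moreover obtain b c where q: "q = (b, c)"
    by fastforce
  ultimately have "(b @ c, length b) \<in> (SIGMA x:supp a. {..length x})"
    using assms by (simp add: supp_def coprod_apply)
  then show "q \<in> (\<lambda>(x, i). (take i x, drop i x)) ` (SIGMA x:supp a. {..length x})"
    unfolding q by (rule rev_image_eqI) simp
qed (use assms in \<open>auto simp: supp_def coprod_apply\<close>)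

lemma inj_on_deconcat: "inj_on (\<lambda>(x, i). (take i x, drop i x)) (SIGMA x:A. {..length x})"
  by (rule inj_onI) (auto, metis append_take_drop_id, metis append_take_drop_id length_take min_absorb2)

lemma phi_coprod:
  assumes "a \<in> Wvec"
  shows "phi2 (coprod a) = coprod (phi a)"
proof
  fix p :: "ntil list \<times> ntil list"
  obtain b c where p: "p = (b, c)"
    by fastforce
  define split_at where "split_at = (\<lambda>(x, i). (take i x, drop i x :: ntil list))"
  define A where "A = (SIGMA x:supp a. {..length x})"
  have fin: "finite (supp a)"
    using assms by (rule Wvec_finite_supp)
  have "phi2 (coprod a) p
      = (\<Sum>q\<in>split_at ` A. coprod a q * phi_basis (fst q) b * phi_basis (snd q) c)"
    unfolding phi2_def p supp_coprod[OF fin] split_at_def A_def by (simp add: case_prod_beta)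
  also have "\<dots> = (\<Sum>(x, i)\<in>A. a x * (phi_basis (take i x) b * phi_basis (drop i x) c))"
    unfolding sum.reindex[OF inj_on_deconcat[of "supp a", folded split_at_def A_def]]
    by (intro sum.cong) (auto simp: split_at_def coprod_apply[OF fin] mult.assoc)
  also have "\<dots> = (\<Sum>x\<in>supp a. a x * phi_basis x (b @ c))"
    using fin by (simp add: A_def sum.Sigma[symmetric] sum_distrib_left[symmetric] phi_basis_deconcat)
  also have "\<dots> = coprod (phi a) p"
    using phi_in_Qvec[OF assms] by (simp add: p coprod_apply Qvec_def phi_def)
  finally show "phi2 (coprod a) p = coprod (phi a) p" .
qed
section \<open>Antipode\<close>

fun inc_hd :: "nat list \<Rightarrow> nat list" where
  "inc_hd [] = []"
| "inc_hd (j # J) = Suc j # J"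

fun comps_list :: "nat \<Rightarrow> nat list list" where
  "comps_list 0 = [[]]"
| "comps_list (Suc 0) = [[1]]"
| "comps_list (Suc (Suc n)) = map (Cons 1) (comps_list (Suc n)) @ map inc_hd (comps_list (Suc n))"

lemma comps_list_Suc_Cons:
  "J \<in> set (comps_list (Suc n)) \<Longrightarrow> \<exists>j J'. J = Suc j # J'"
proof (induction n arbitrary: J)
  case (Suc n)
  then show ?case
    by (auto simp del: comps_list.simps(2) simp: comps_list.simps(3)[of n] dest: Suc.IH)
qed simp

lemma pos_sum_list_eq_0: "\<forall>j\<in>set J. 0 < j \<Longrightarrow> sum_list J = (0::nat) \<Longrightarrow> J = []"
  by (cases J) auto

lemma ncomps_0: "ncomps 0 = {[]}"
  by (auto simp: ncomps_def pos_sum_list_eq_0)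

lemma ncomps_Suc_Suc:
  "ncomps (Suc (Suc n)) = Cons 1 ` ncomps (Suc n) \<union> inc_hd ` ncomps (Suc n)"
proof (intro equalityI subsetI)
  fix J assume "J \<in> ncomps (Suc (Suc n))"
  then obtain j J' where J: "J = j # J'" "0 < j" "\<forall>i\<in>set J'. 0 < i" "j + sum_list J' = Suc (Suc n)"
    by (cases J) (auto simp: ncomps_def)
  show "J \<in> Cons 1 ` ncomps (Suc n) \<union> inc_hd ` ncomps (Suc n)"
  proof (cases "j = 1")
    case True
    with J show ?thesis
      by (auto simp: ncomps_def)
  next
    case False
    with J have "J = inc_hd ((j - 1) # J')" "(j - 1) # J' \<in> ncomps (Suc n)"
      by (auto simp: ncomps_def)
    then show ?thesis
      by blast
  qed
next
  fix J assume "J \<in> Cons 1 ` ncomps (Suc n) \<union> inc_hd ` ncomps (Suc n)"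
  moreover have "inc_hd J0 \<in> ncomps (Suc (Suc n))" if "J0 \<in> ncomps (Suc n)" for J0
    using that by (cases J0) (auto simp: ncomps_def)
  ultimately show "J \<in> ncomps (Suc (Suc n))"
    by (auto simp: ncomps_def)
qed

lemma set_comps_list: "set (comps_list n) = ncomps n"
proof (induction n rule: comps_list.induct)
  case 2
  have "J = [1]" if "J \<in> ncomps (Suc 0)" for J
  proof -
    from that obtain j J' where J: "J = j # J'" "0 < j" "\<forall>i\<in>set J'. 0 < i" "j + sum_list J' = 1"
      by (cases J) (auto simp: ncomps_def)
    then have "j = 1" "sum_list J' = 0"
      by linarith+
    with J show ?thesis
      by (metis pos_sum_list_eq_0)
  qed
  then show ?case
    by (auto simp: ncomps_def)
qed (simp_all add: ncomps_0 ncomps_Suc_Suc)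

lemma distinct_comps_list: "distinct (comps_list n)"
proof (induction n rule: comps_list.induct)
  case (3 n)
  have "inj_on inc_hd (set (comps_list (Suc n)))"
    by (rule inj_onI) (auto dest!: comps_list_Suc_Cons)
  moreover have "1 # J \<noteq> inc_hd J'" if "J' \<in> set (comps_list (Suc n))" for J J'
    using comps_list_Suc_Cons[OF that] by auto
  ultimately show ?case
    using 3 by (auto simp: distinct_map)
qed auto

definition coarsenings :: "ntil list \<Rightarrow> ntil list list" where
  "coarsenings g = map (\<lambda>J. blocks J g) (comps_list (length g))"

lemma count_coarsenings:
  "length g = n \<Longrightarrow> card {J \<in> ncomps n. blocks J g = b} = count_list (coarsenings g) b"
  using distinct_comps_list[of n]
  by (simp add: coarsenings_def set_comps_list[symmetric] count_list_eq_length_filter filter_map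
      o_def distinct_length_filter Int_def eq_commute conj_commute)

lemma coarsenings_Nil: "coarsenings [] = [[]]"
  by (simp add: coarsenings_def)

lemma coarsenings_single: "coarsenings [x] = [[x]]"
  by (simp add: coarsenings_def)

text \<open>Either \<open>x\<close> forms a block of its own, or it is merged into the first block of a coarsening
  of the rest.\<close>
lemma coarsenings_Cons:
  assumes "g \<noteq> []"
  shows "coarsenings (x # g) = map (Cons x) (coarsenings g) @ coarsenings (tadd x (hd g) # tl g)"
proof -
  obtain y g' where g: "g = y # g'"
    using assms by (cases g) auto
  have "blocks (inc_hd J) (x # y # g') = blocks J (tadd x y # g')"
    if "J \<in> set (comps_list (Suc (length g')))" for J
    using comps_list_Suc_Cons[OF that] by (auto simp: tadd_assoc)
  then show ?thesis
    by (simp add: g coarsenings_def)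
qed

lemma count_list_map_Cons:
  "count_list (map (Cons x) L) b = (case b of [] \<Rightarrow> 0 | c # b' \<Rightarrow> if c = x then count_list L b' else 0)"
  by (induction L) (auto split: list.splits)

lemma sum_psi_basis_Cons:
  "(\<Sum>d\<leftarrow>L. psi_basis (x # d) b) =
    (if x = Eps then - (\<Sum>d\<leftarrow>L. psi_basis d b) else if x = NN 0 then 0
     else case b of [] \<Rightarrow> 0 | c # b' \<Rightarrow> if c = x then (\<Sum>d\<leftarrow>L. psi_basis d b') else 0)"
  by (induction L) (cases x; auto split: list.splits)+

text \<open>The coarsenings in which a leading \<open>Eps\<close> is a block of its own cancel against those in which
  it is absorbed into the next block.\<close>
lemma sum_psi_basis_coarsenings_Eps_Cons:
  assumes "is_comp g" "g \<noteq> []"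
  shows "(\<Sum>d\<leftarrow>coarsenings (Eps # g). psi_basis d b :: 'k::comm_ring_1) = 0"
proof -
  have "tadd Eps (hd g) = hd g"
    using assms by (cases g) (auto simp: tadd_Eps_left)
  then show ?thesis
    using assms(2) by (simp add: coarsenings_Cons o_def)
qed

lemma sum_psi_basis_coarsenings_NN_Cons:
  "n \<noteq> 0 \<Longrightarrow> (\<Sum>d\<leftarrow>coarsenings (NN n # y # g). psi_basis d b :: 'k::comm_ring_1)
    = (case b of [] \<Rightarrow> 0 | c # b' \<Rightarrow> if c = NN n then (\<Sum>d\<leftarrow>coarsenings (y # g). psi_basis d b') else 0)
      + (\<Sum>d\<leftarrow>coarsenings (tadd (NN n) y # g). psi_basis d b)"
  by (simp add: coarsenings_Cons sum_psi_basis_Cons o_def del: psi_basis.simps)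

lemma sum_psi_basis_coarsenings_NN_Eps:
  assumes "n \<noteq> 0" "is_comp g"
  shows "(\<Sum>d\<leftarrow>coarsenings (NN n # Eps # g). psi_basis d b :: 'k::comm_ring_1)
       = (if g = [] then 0 else (\<Sum>d\<leftarrow>coarsenings (NN n # g). psi_basis d b))"
proof (cases "g = []")
  case True
  then show ?thesis
    unfolding True sum_psi_basis_coarsenings_NN_Cons[OF assms(1)]
    using assms by (simp add: coarsenings_single psi_basis_eq split: list.split)
next
  case False
  then show ?thesis
    using assms by (simp add: sum_psi_basis_coarsenings_NN_Cons sum_psi_basis_coarsenings_Eps_Cons split: list.split)
qed

lemma sum_psi_basis_coarsenings:
  assumes "is_comp g" "g \<noteq> []" "hd g \<noteq> Eps"
  shows "(\<Sum>d\<leftarrow>coarsenings g. psi_basis d b :: 'k::comm_ring_1)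
       = (if last g = Eps then 0 else of_nat (count_list (coarsenings (bar g)) b))"
  using assms
proof (induction "length g" arbitrary: g b rule: less_induct)
  case less
  from less.prems obtain n g' where g: "g = NN n # g'" and n: "n \<noteq> 0"
    by (cases g; cases "hd g") auto
  show ?case
  proof (cases g')
    case Nil
    then show ?thesis
      using n by (simp add: g coarsenings_single psi_basis_eq)
  next
    case (Cons y g'')
    have y: "y \<noteq> NN 0" "is_comp g''"
      using less.prems g Cons by auto
    show ?thesis
    proof (cases y)
      case Eps
      then show ?thesis
        using less.hyps[of "NN n # g''"] n y
        by (simp add: g Cons sum_psi_basis_coarsenings_NN_Eps)
    next
      case (NN m)
      with y have m: "m \<noteq> 0"
        by simp
      have "last g' = Eps \<longleftrightarrow> last g = Eps" "last (NN (n + m) # g'') = Eps \<longleftrightarrow> last g = Eps"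
        using g Cons NN by auto
      moreover have "coarsenings (bar g)
          = map (Cons (NN n)) (coarsenings (bar g')) @ coarsenings (NN (n + m) # bar g'')"
        by (simp add: g Cons NN coarsenings_Cons)
      ultimately show ?thesis
        using less.hyps[of g'] less.hyps[of "NN (n + m) # g''"] g Cons NN y m n
        by (auto simp: sum_psi_basis_coarsenings_NN_Cons count_list_map_Cons split: list.split)
    qed
  qed
qed

lemma sum_phi_basis_coarsenings:
  "is_comp g \<Longrightarrow> (\<Sum>d\<leftarrow>coarsenings g. phi_basis d b :: 'k::comm_ring_1)
     = (if g \<noteq> [] \<and> last g = Eps then 0 else of_nat (count_list (coarsenings (bar g)) b))"
proof (induction g)
  case Nil
  then show ?case
    by (simp add: coarsenings_Nil phi_basis_eq_psi_basis)
next
  case (Cons x g)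
  show ?case
  proof (cases x)
    case (NN n)
    with Cons.prems have "n \<noteq> 0"
      by simp
    then have "phi_basis d b = psi_basis d b" if "d \<in> set (coarsenings (x # g))" for d
      using that comps_list_Suc_Cons tadd_NN_neq_Eps
      by (fastforce simp: coarsenings_def NN phi_basis_eq_psi_basis)
    then have "(\<Sum>d\<leftarrow>coarsenings (x # g). phi_basis d b :: 'k) = (\<Sum>d\<leftarrow>coarsenings (x # g). psi_basis d b)"
      by (intro arg_cong[where f = sum_list] map_cong) simp_all
    also have "\<dots> = (if x # g \<noteq> [] \<and> last (x # g) = Eps then 0
        else of_nat (count_list (coarsenings (bar (x # g))) b))"
      using sum_psi_basis_coarsenings[of "x # g" b] Cons.prems NN by simp
    finally show ?thesis .
  next
    case Eps
    show ?thesis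
    proof (cases "g = []")
      case True
      then show ?thesis
        using Eps by (simp add: coarsenings_single phi_basis_Cons)
    next
      case False
      have "tadd Eps (hd g) = hd g"
        using Cons.prems False by (cases g) (auto simp: tadd_Eps_left)
      then have "(\<Sum>d\<leftarrow>coarsenings (x # g). phi_basis d b :: 'k) = (\<Sum>d\<leftarrow>coarsenings g. phi_basis d b)"
        using False Eps by (simp add: coarsenings_Cons phi_basis_Cons o_def)
      also have "\<dots> = (if x # g \<noteq> [] \<and> last (x # g) = Eps then 0
          else of_nat (count_list (coarsenings (bar (x # g))) b))"
        using Cons Eps False by simp
      finally show ?thesis .
    qed
  qed
qed

lemma antipode_eq_count_coarsenings:
  "antipode a = (\<lambda>\<beta>. \<Sum>\<alpha>\<in>supp a. a \<alpha> * (-1) ^ length \<alpha> * of_nat (count_list (coarsenings (rev \<alpha>)) \<beta>))"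
  by (simp add: antipode_def count_coarsenings)

lemma antipode_coeff_phi:
  assumes "is_comp x"
  shows "(-1) ^ length x * (\<Sum>d\<leftarrow>coarsenings (rev x). phi_basis d b)
       = phi_coeff x * ((-1) ^ length (bar x) * of_nat (count_list (coarsenings (rev (bar x))) b) :: 'k::comm_ring_1)"
proof -
  have "(-1) ^ length x = eps_sign x * ((-1) ^ length (bar x) :: 'k)"
    unfolding eps_sign_def by (subst length_eq_ell_eps_plus_length_bar) (simp add: power_add)
  moreover have "x \<noteq> [] \<Longrightarrow> last (rev x) = hd x"
    by (cases x) auto
  ultimately show ?thesis
    using assms by (auto simp: sum_phi_basis_coarsenings phi_coeff_def bar_rev)
qed

lemma antipode_phi:
  assumes "a \<in> Wvec"
  shows "antipode (phi a) = phi (antipode a)"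
proof
  fix b
  have "antipode (phi a) b
      = (\<Sum>x\<in>supp a. a x * phi_coeff x * ((-1) ^ length (bar x) * of_nat (count_list (coarsenings (rev (bar x))) b)))"
    by (simp add: antipode_eq_count_coarsenings mult.assoc sum_supp_phi[OF assms])
  also have "\<dots> = (\<Sum>x\<in>supp a. a x * (-1) ^ length x * (\<Sum>d\<leftarrow>coarsenings (rev x). phi_basis d b))"
    using Wvec_supp_is_comp[OF assms] by (intro sum.cong) (simp_all add: antipode_coeff_phi mult.assoc)
  also have "\<dots> = phi (antipode a) b"
    unfolding antipode_eq_count_coarsenings
    by (rule phi_count_list_combination[OF Wvec_finite_supp[OF assms], symmetric])
  finally show "antipode (phi a) b = phi (antipode a) b" .
qed

section \<open>Monomials\<close>

definition mono_supp :: "mono \<Rightarrow> nat set" where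
  "mono_supp f = {i. f i \<noteq> NN 0}"

text \<open>The exponents of a monomial read from left to right: the unique \<open>a\<close> such that \<open>f\<close> occurs
  in \<open>M_a\<close>.\<close>
definition mono_comp :: "mono \<Rightarrow> ntil list" where
  "mono_comp f = map f (sorted_list_of_set (mono_supp f))"

lemma fin_mono_iff: "fin_mono f \<longleftrightarrow> finite (mono_supp f)"
  by (simp add: fin_mono_def mono_supp_def)

lemma mono_supp_expo:
  "sorted_wrt (<) ks \<Longrightarrow> length ks = length a \<Longrightarrow> is_comp a \<Longrightarrow>
    mono_supp (expo ks a) = set ks \<and> map (expo ks a) ks = a"
proof (induction ks a rule: list_induct2')
  case (4 i ks x a)
  then have IH: "mono_supp (expo ks a) = set ks" "map (expo ks a) ks = a" "i \<notin> set ks" "x \<noteq> NN 0"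
    by auto
  show ?case
  proof
    show "mono_supp (expo (i # ks) (x # a)) = set (i # ks)"
      using IH by (auto simp: mono_supp_def)
    have "map ((expo ks a)(i := x)) ks = map (expo ks a) ks"
      using IH(3) by (intro map_cong) auto
    then show "map (expo (i # ks) (x # a)) (i # ks) = x # a"
      using IH by simp
  qed
qed (auto simp: mono_supp_def)

lemma expo_map: "distinct ks \<Longrightarrow> expo ks (map f ks) = (\<lambda>i. if i \<in> set ks then f i else NN 0)"
  by (induction ks) (auto simp: fun_eq_iff)

lemma expo_eq_iff:
  assumes "sorted_wrt (<) ks" "length ks = length a" "is_comp a"
  shows "expo ks a = f \<longleftrightarrow> fin_mono f \<and> mono_comp f = a \<and> ks = sorted_list_of_set (mono_supp f)"
proof
  assume "expo ks a = f"
  then have "mono_supp f = set ks" "map f ks = a"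
    using mono_supp_expo[OF assms] by auto
  moreover have "sorted_list_of_set (set ks) = ks"
    using assms(1) by (simp add: sorted_list_of_set.idem_if_sorted_distinct strict_sorted_iff)
  ultimately show "fin_mono f \<and> mono_comp f = a \<and> ks = sorted_list_of_set (mono_supp f)"
    by (simp add: fin_mono_iff mono_comp_def)
next
  assume f: "fin_mono f \<and> mono_comp f = a \<and> ks = sorted_list_of_set (mono_supp f)"
  then have "distinct ks" "set ks = mono_supp f" "a = map f ks"
    by (auto simp: fin_mono_iff mono_comp_def)
  then show "expo ks a = f"
    by (auto simp: expo_map mono_supp_def fun_eq_iff)
qed

lemma Mser_eq:
  assumes "is_comp a"
  shows "Mser a f = (if fin_mono f \<and> mono_comp f = a then 1 else 0)"
proof -
  let ?L = "sorted_list_of_set (mono_supp f)"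
  have "sorted_wrt (<) ks \<and> length ks = length a \<and> expo ks a = f
      \<longleftrightarrow> fin_mono f \<and> mono_comp f = a \<and> ks = ?L" for ks
  proof
    assume "sorted_wrt (<) ks \<and> length ks = length a \<and> expo ks a = f"
    then show "fin_mono f \<and> mono_comp f = a \<and> ks = ?L"
      using expo_eq_iff[OF _ _ assms] by blast
  next
    assume f: "fin_mono f \<and> mono_comp f = a \<and> ks = ?L"
    then have "sorted_wrt (<) ks" "length ks = length a"
      by (auto simp: mono_comp_def)
    with f show "sorted_wrt (<) ks \<and> length ks = length a \<and> expo ks a = f"
      using expo_eq_iff[OF _ _ assms] by blast
  qed
  then have "{ks. sorted_wrt (<) ks \<and> length ks = length a \<and> expo ks a = f}
      = (if fin_mono f \<and> mono_comp f = a then {?L} else {})"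
    by auto
  then show ?thesis
    by (simp add: Mser_def)
qed

lemma realize_eq:
  assumes "a \<in> Wvec"
  shows "realize a f = (if fin_mono f then a (mono_comp f) else 0)"
proof -
  have "realize a f = (\<Sum>x\<in>supp a. if x = mono_comp f then (if fin_mono f then a x else 0) else 0)"
    unfolding realize_def using Wvec_supp_is_comp[OF assms] by (intro sum.cong) (auto simp: Mser_eq)
  also have "\<dots> = (if fin_mono f then a (mono_comp f) else 0)"
    using Wvec_finite_supp[OF assms] by (simp add: sum.delta' supp_def)
  finally show ?thesis .
qed

lemma mono_comp_expo_upt:
  assumes "is_comp a"
  shows "fin_mono (expo [0..<length a] a)" "mono_comp (expo [0..<length a] a) = a"
  using expo_eq_iff[of "[0..<length a]" a "expo [0..<length a] a"] assms by auto

section \<open>Quasi-shuffles\<close>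

text \<open>With multiplicity, \<open>M_u M_v\<close> is the sum of \<open>M_w\<close> over \<open>w \<in> qshuffles u v\<close>.\<close>
fun qshuffles :: "ntil list \<Rightarrow> ntil list \<Rightarrow> ntil list list" where
  "qshuffles [] v = [v]"
| "qshuffles (x # u) [] = [x # u]"
| "qshuffles (x # u) (y # v) =
     map (Cons x) (qshuffles u (y # v)) @ map (Cons y) (qshuffles (x # u) v)
     @ map (Cons (tadd x y)) (qshuffles u v)"

lemma qshuffles_Nil_right [simp]: "qshuffles u [] = [u]"
  by (cases u) auto

lemma sum_psi_basis_qshuffles:
  "is_comp u \<Longrightarrow> is_comp v \<Longrightarrow>
    (\<Sum>d\<leftarrow>qshuffles u v. psi_basis d b) = eps_sign u * eps_sign v * of_nat (count_list (qshuffles (bar u) (bar v)) b)"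
proof (induction u v arbitrary: b rule: qshuffles.induct)
  case (1 v)
  then show ?case
    by (simp add: psi_basis_eq)
next
  case (2 x u)
  then show ?case
    by (cases "x = Eps") (auto simp: psi_basis_eq)
next
  case (3 x u y v)
  then have "x \<noteq> NN 0" "y \<noteq> NN 0"
    by simp_all
  then show ?case
    using 3 by (cases x; cases y; cases b)
      (auto simp: sum_psi_basis_Cons count_list_map_Cons algebra_simps o_def split: list.splits)
qed

lemma sum_phi_basis_Cons:
  "(\<Sum>d\<leftarrow>L. phi_basis (x # d) b) = (if x = Eps then 0 else (\<Sum>d\<leftarrow>L. psi_basis (x # d) b))"
  by (induction L) (auto simp: phi_basis_Cons)

text \<open>Quasi-shuffles starting with the \<open>Eps\<close> of \<open>u\<close> cancel against those in which it is merged with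
  \<open>y\<close>, since \<open>Eps + y = y\<close>.\<close>
lemma sum_phi_basis_qshuffles_Eps_left:
  assumes "is_comp u" "is_comp (y # v)" "y \<noteq> Eps"
  shows "(\<Sum>d\<leftarrow>qshuffles (Eps # u) (y # v). phi_basis d b :: 'k::comm_ring_1) = 0"
proof -
  have "tadd Eps y = y"
    using assms by (simp add: tadd_Eps_left)
  then have "(\<Sum>d\<leftarrow>qshuffles (Eps # u) (y # v). psi_basis d b :: 'k)
      = - (\<Sum>d\<leftarrow>qshuffles u (y # v). psi_basis d b) + (\<Sum>d\<leftarrow>qshuffles (Eps # u) (y # v). phi_basis d b)"
    using assms(3) by (simp add: sum_phi_basis_Cons o_def)
  then have "(\<Sum>d\<leftarrow>qshuffles (Eps # u) (y # v). phi_basis d b :: 'k)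
      = (\<Sum>d\<leftarrow>qshuffles (Eps # u) (y # v). psi_basis d b) + (\<Sum>d\<leftarrow>qshuffles u (y # v). psi_basis d b)"
    by (simp add: algebra_simps)
  also have "\<dots> = 0"
    using assms by (simp add: sum_psi_basis_qshuffles del: qshuffles.simps)
  finally show ?thesis .
qed

lemma sum_phi_basis_qshuffles_Eps_right:
  assumes "is_comp (x # u)" "is_comp v" "x \<noteq> Eps"
  shows "(\<Sum>d\<leftarrow>qshuffles (x # u) (Eps # v). phi_basis d b :: 'k::comm_ring_1) = 0"
proof -
  have "tadd x Eps = x"
    using assms by (simp add: tadd_Eps_right)
  then have "(\<Sum>d\<leftarrow>qshuffles (x # u) (Eps # v). psi_basis d b :: 'k)
      = - (\<Sum>d\<leftarrow>qshuffles (x # u) v. psi_basis d b) + (\<Sum>d\<leftarrow>qshuffles (x # u) (Eps # v). phi_basis d b)"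
    using assms(3) by (simp add: sum_phi_basis_Cons o_def)
  then have "(\<Sum>d\<leftarrow>qshuffles (x # u) (Eps # v). phi_basis d b :: 'k)
      = (\<Sum>d\<leftarrow>qshuffles (x # u) (Eps # v). psi_basis d b) + (\<Sum>d\<leftarrow>qshuffles (x # u) v. psi_basis d b)"
    by (simp add: algebra_simps)
  also have "\<dots> = 0"
    using assms by (simp add: sum_psi_basis_qshuffles del: qshuffles.simps)
  finally show ?thesis .
qed

lemma sum_phi_basis_qshuffles:
  assumes "is_comp u" "is_comp v"
  shows "(\<Sum>d\<leftarrow>qshuffles u v. phi_basis d b :: 'k::comm_ring_1)
       = phi_coeff u * phi_coeff v * of_nat (count_list (qshuffles (bar u) (bar v)) b)"
proof (cases "u = [] \<or> v = []")
  case True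
  then show ?thesis
    using assms by (auto simp: phi_basis_eq_psi_basis psi_basis_eq phi_coeff_def)
next
  case False
  then obtain x u' y v' where u: "u = x # u'" and v: "v = y # v'"
    by (cases u; cases v) auto
  consider "x = Eps" "y = Eps" | "x = Eps" "y \<noteq> Eps" | "x \<noteq> Eps" "y = Eps" | "x \<noteq> Eps" "y \<noteq> Eps"
    by blast
  then show ?thesis
  proof cases
    case 1
    then show ?thesis
      by (simp add: u v sum_phi_basis_Cons o_def phi_coeff_def)
  next
    case 2
    then show ?thesis
      using sum_phi_basis_qshuffles_Eps_left[of u' y v' b] assms by (simp add: u v phi_coeff_def)
  next
    case 3
    then show ?thesis
      using sum_phi_basis_qshuffles_Eps_right[of x u' v' b] assms by (simp add: u v phi_coeff_def)
  next
    case 4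
    then have "tadd x y \<noteq> Eps"
      using assms u v by (cases x; cases y) auto
    then show ?thesis
      using 4 assms sum_psi_basis_qshuffles[of u v b]
      by (simp add: u v sum_phi_basis_Cons o_def phi_coeff_def algebra_simps)
  qed
qed

section \<open>The product\<close>

definition tadd_decomps :: "ntil \<Rightarrow> (ntil \<times> ntil) set" where
  "tadd_decomps x = {(p, q). tadd p q = x}"

lemma finite_tadd_decomps: "finite (tadd_decomps x)"
proof -
  define V where "V = insert Eps (NN ` {..case x of NN n \<Rightarrow> n | Eps \<Rightarrow> 0})"
  have "tadd_decomps x \<subseteq> V \<times> V"
  proof
    fix z assume "z \<in> tadd_decomps x"
    then obtain p q where "z = (p, q)" "tadd p q = x"
      by (auto simp: tadd_decomps_def)
    then show "z \<in> V \<times> V"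
      unfolding V_def by (cases p; cases q; cases x) (auto split: if_splits)
  qed
  then show ?thesis
    by (rule finite_subset) (simp add: V_def)
qed

text \<open>Prepending the exponent of a variable to a composition, where exponent \<open>0\<close> means that the
  variable does not occur.\<close>
definition cons_nz :: "ntil \<Rightarrow> ntil list \<Rightarrow> ntil list" where
  "cons_nz p w = (if p = NN 0 then w else p # w)"

definition match_nz :: "ntil \<Rightarrow> ntil list \<Rightarrow> bool" where
  "match_nz p w \<longleftrightarrow> p = NN 0 \<or> (w \<noteq> [] \<and> hd w = p)"

definition rest_nz :: "ntil \<Rightarrow> ntil list \<Rightarrow> ntil list" where
  "rest_nz p w = (if p = NN 0 then w else tl w)"

lemma cons_nz_eq_iff: "cons_nz p v = w \<longleftrightarrow> match_nz p w \<and> v = rest_nz p w"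
  by (cases w) (auto simp: cons_nz_def match_nz_def rest_nz_def)

lemma match_nz_cons_nz [simp]: "match_nz p (cons_nz p w)"
  by (simp add: cons_nz_def match_nz_def)

lemma rest_nz_cons_nz [simp]: "rest_nz p (cons_nz p w) = w"
  by (simp add: cons_nz_def rest_nz_def)

lemma is_comp_rest_nz: "is_comp u \<Longrightarrow> is_comp (rest_nz p u)"
  by (cases u) (auto simp: rest_nz_def)

lemma count_qshuffles_Nil: "count_list (qshuffles u v) [] = (if u = [] \<and> v = [] then 1 else 0)"
  by (cases u; cases v) (auto simp: count_list_map_Cons)

lemma count_qshuffles_Cons:
  assumes "is_comp u" "is_comp v" "x \<noteq> NN 0"
  shows "count_list (qshuffles u v) (x # w)
       = (\<Sum>(p, q)\<in>tadd_decomps x. if match_nz p u \<and> match_nz q v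
           then count_list (qshuffles (rest_nz p u) (rest_nz q v)) w else 0)"
proof -
  let ?F = "\<lambda>(p, q). if match_nz p u \<and> match_nz q v
      then count_list (qshuffles (rest_nz p u) (rest_nz q v)) w else 0"
  define heads where "heads = (\<lambda>w :: ntil list. case w of [] \<Rightarrow> {NN 0} | m # _ \<Rightarrow> {NN 0, m})"
  have fin: "finite (heads u \<times> heads v)"
    by (auto simp: heads_def split: list.splits)
  have "sum ?F (tadd_decomps x) = sum ?F (heads u \<times> heads v \<inter> tadd_decomps x)"
    by (rule sum.mono_neutral_right[OF finite_tadd_decomps])
      (auto simp: match_nz_def heads_def split: list.splits if_splits)
  also have "\<dots> = (\<Sum>z\<in>heads u \<times> heads v. if z \<in> tadd_decomps x then ?F z else 0)"
    by (rule sum.inter_restrict[OF fin])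
  also have "\<dots> = count_list (qshuffles u v) (x # w)"
  proof (cases u)
    case Nil
    then show ?thesis
      using assms by (cases v) (auto simp: heads_def tadd_decomps_def match_nz_def rest_nz_def count_list_map_Cons)
  next
    case (Cons m u')
    then have m: "m \<noteq> NN 0"
      using assms by simp
    show ?thesis
    proof (cases v)
      case Nil
      then show ?thesis
        using assms Cons m by (auto simp: heads_def tadd_decomps_def match_nz_def rest_nz_def count_list_map_Cons)
    next
      case (Cons n v')
      then have n: "n \<noteq> NN 0"
        using assms by simp
      show ?thesis
        using \<open>u = m # u'\<close> Cons m n assms
        by (auto simp: heads_def tadd_decomps_def match_nz_def rest_nz_def count_list_map_Cons
            sum.cartesian_product[symmetric] tadd_eq_NN0_iff)
    qed
  qed
  finally show ?thesis
    by simp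
qed

definition factorizations :: "mono \<Rightarrow> (mono \<times> mono) set" where
  "factorizations f = {(g, h). fin_mono g \<and> fin_mono h \<and> (\<forall>i. f i = tadd (g i) (h i))}"

lemma factorizations_not_fin_mono: "\<not> fin_mono f \<Longrightarrow> factorizations f = {}"
proof (rule ccontr)
  assume nf: "\<not> fin_mono f" and "factorizations f \<noteq> {}"
  then obtain g h where gh: "(g, h) \<in> factorizations f"
    by auto
  then have "mono_supp f \<subseteq> mono_supp g \<union> mono_supp h"
    by (auto simp: factorizations_def mono_supp_def tadd_eq_NN0_iff)
  with gh nf show False
    by (auto simp: factorizations_def fin_mono_iff dest: finite_subset)
qed

lemma factorizations_const_NN0: "factorizations (\<lambda>_. NN 0) = {(\<lambda>_. NN 0, \<lambda>_. NN 0)}"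
  by (auto simp: factorizations_def fin_mono_def NN0_eq_tadd_iff fun_eq_iff)

lemma fin_mono_min_induct [consumes 1, case_names zero upd]:
  assumes "fin_mono f"
    and zero: "P (\<lambda>_. NN 0)"
    and upd: "\<And>f p0 x. fin_mono f \<Longrightarrow> \<forall>i\<in>mono_supp f. p0 < i \<Longrightarrow> x \<noteq> NN 0 \<Longrightarrow> P f \<Longrightarrow> P (f(p0 := x))"
  shows "P f"
  using assms(1)
proof (induction "card (mono_supp f)" arbitrary: f)
  case 0
  then have "mono_supp f = {}"
    by (simp add: fin_mono_iff)
  then have "f = (\<lambda>_. NN 0)"
    by (auto simp: mono_supp_def)
  with zero show ?case
    by simp
next
  case (Suc n f)
  have fin: "finite (mono_supp f)"
    using Suc.prems by (simp add: fin_mono_iff)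
  define p0 where "p0 = Min (mono_supp f)"
  define f' where "f' = f(p0 := NN 0)"
  have "mono_supp f \<noteq> {}"
    using Suc.hyps(2) by auto
  then have p0: "p0 \<in> mono_supp f"
    using fin by (simp add: p0_def)
  have supp': "mono_supp f' = mono_supp f - {p0}"
    by (auto simp: f'_def mono_supp_def)
  have "P f'"
    using Suc.hyps fin p0 supp' by (simp add: fin_mono_iff)
  moreover have "\<forall>i\<in>mono_supp f'. p0 < i"
    using supp' fin by (auto simp: p0_def intro: Min_le le_neq_implies_less)
  moreover have "f = f'(p0 := f p0)" "f p0 \<noteq> NN 0"
    using p0 by (auto simp: f'_def mono_supp_def)
  ultimately show ?case
    using upd[of f' p0 "f p0"] fin supp' by (simp add: fin_mono_iff)
qed

lemma mono_comp_fun_upd: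
  assumes "finite (mono_supp g)" "\<forall>i\<in>mono_supp g. p0 < i"
  shows "mono_comp (g(p0 := p)) = cons_nz p (mono_comp g)"
proof (cases "p = NN 0")
  case True
  moreover have "g p0 = NN 0"
    using assms(2) by (auto simp: mono_supp_def)
  ultimately have "g(p0 := p) = g"
    by (simp add: fun_upd_idem)
  with True show ?thesis
    by (simp add: cons_nz_def)
next
  case False
  have p0: "p0 \<notin> mono_supp g"
    using assms(2) by auto
  have "Min (insert p0 (mono_supp g)) = p0"
    using assms by (intro Min_eqI) auto
  then have "sorted_list_of_set (insert p0 (mono_supp g)) = p0 # sorted_list_of_set (mono_supp g)"
    using sorted_list_of_set_nonempty[of "insert p0 (mono_supp g)"] assms(1) p0 by simp
  moreover have "map (g(p0 := p)) (sorted_list_of_set (mono_supp g)) = map g (sorted_list_of_set (mono_supp g))"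
    using p0 assms(1) by (intro map_cong) auto
  moreover have "mono_supp (g(p0 := p)) = insert p0 (mono_supp g)"
    using False by (auto simp: mono_supp_def)
  ultimately show ?thesis
    using False by (simp add: mono_comp_def cons_nz_def)
qed

lemma fin_mono_fun_upd: "fin_mono g \<Longrightarrow> fin_mono (g(i := p))"
proof -
  assume "fin_mono g"
  moreover have "mono_supp (g(i := p)) \<subseteq> insert i (mono_supp g)"
    by (auto simp: mono_supp_def)
  ultimately show ?thesis
    by (auto simp: fin_mono_iff intro: finite_subset)
qed

definition upd_pair :: "nat \<Rightarrow> (ntil \<times> ntil) \<times> (mono \<times> mono) \<Rightarrow> mono \<times> mono" where
  "upd_pair p0 = (\<lambda>((p, q), (g, h)). (g(p0 := p), h(p0 := q)))"

lemma factorizations_vanish: "(g, h) \<in> factorizations f \<Longrightarrow> f i = NN 0 \<Longrightarrow> g i = NN 0 \<and> h i = NN 0"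
  by (simp add: factorizations_def tadd_eq_NN0_iff[symmetric])

lemma factorizations_fun_upd:
  assumes "f p0 = NN 0"
  shows "factorizations (f(p0 := x)) = upd_pair p0 ` (tadd_decomps x \<times> factorizations f)"
proof (intro equalityI subsetI)
  fix z assume "z \<in> upd_pair p0 ` (tadd_decomps x \<times> factorizations f)"
  then obtain p q g h where pq: "tadd p q = x" and gh: "(g, h) \<in> factorizations f"
    and z: "z = (g(p0 := p), h(p0 := q))"
    by (auto simp: upd_pair_def tadd_decomps_def)
  have "fin_mono (g(p0 := p))" "fin_mono (h(p0 := q))"
    using gh by (auto simp: factorizations_def intro: fin_mono_fun_upd)
  with gh pq show "z \<in> factorizations (f(p0 := x))"
    by (auto simp: z factorizations_def fin_mono_iff)
next
  fix z assume z: "z \<in> factorizations (f(p0 := x))"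
  obtain g h where zz: "z = (g, h)"
    by fastforce
  have "f i = tadd ((g(p0 := NN 0)) i) ((h(p0 := NN 0)) i)" for i
    using z assms by (cases "i = p0") (auto simp: zz factorizations_def dest: spec[of _ i])
  then have "(g(p0 := NN 0), h(p0 := NN 0)) \<in> factorizations f"
    using z by (auto simp: zz factorizations_def intro: fin_mono_fun_upd)
  moreover have "(g p0, h p0) \<in> tadd_decomps x"
    using z by (auto simp: zz factorizations_def tadd_decomps_def dest: spec[of _ p0])
  moreover have "z = upd_pair p0 ((g p0, h p0), (g(p0 := NN 0), h(p0 := NN 0)))"
    by (simp add: zz upd_pair_def)
  ultimately show "z \<in> upd_pair p0 ` (tadd_decomps x \<times> factorizations f)"
    by blast
qed

lemma inj_on_upd_pair:
  assumes "f p0 = NN 0"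
  shows "inj_on (upd_pair p0) (tadd_decomps x \<times> factorizations f)"
proof (rule inj_onI)
  fix y1 y2
  assume y: "y1 \<in> tadd_decomps x \<times> factorizations f" "y2 \<in> tadd_decomps x \<times> factorizations f"
    and eq: "upd_pair p0 y1 = upd_pair p0 y2"
  obtain p1 q1 g1 h1 p2 q2 g2 h2 where y12: "y1 = ((p1, q1), (g1, h1))" "y2 = ((p2, q2), (g2, h2))"
    by (metis prod.collapse)
  have "g1 p0 = NN 0" "h1 p0 = NN 0" "g2 p0 = NN 0" "h2 p0 = NN 0"
    using y assms factorizations_vanish unfolding y12 by blast+
  moreover have "g1(p0 := p1) = g2(p0 := p2)" "h1(p0 := q1) = h2(p0 := q2)"
    using eq by (simp_all add: y12 upd_pair_def)
  ultimately show "y1 = y2"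
    unfolding y12 by (metis fun_upd_same fun_upd_triv fun_upd_upd)
qed

lemma finite_factorizations: "fin_mono f \<Longrightarrow> finite (factorizations f)"
proof (induction f rule: fin_mono_min_induct)
  case (upd f p0 x)
  then have "f p0 = NN 0"
    by (auto simp: mono_supp_def)
  with upd.IH show ?case
    unfolding factorizations_fun_upd[of f p0, OF \<open>f p0 = NN 0\<close>] by (simp add: finite_tadd_decomps)
qed (simp add: factorizations_const_NN0)

lemma mono_comp_upd_pair:
  assumes "gh \<in> factorizations f" "\<forall>i\<in>mono_supp f. p0 < i"
  shows "mono_comp (fst (upd_pair p0 ((p, q), gh))) = cons_nz p (mono_comp (fst gh))
      \<and> mono_comp (snd (upd_pair p0 ((p, q), gh))) = cons_nz q (mono_comp (snd gh))"
proof -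
  obtain g h where gh: "gh = (g, h)"
    by fastforce
  with assms(1) have "fin_mono g" "fin_mono h" "mono_supp g \<subseteq> mono_supp f" "mono_supp h \<subseteq> mono_supp f"
    by (auto simp: factorizations_def mono_supp_def tadd_eq_NN0_iff)
  then show ?thesis
    using assms(2) by (auto simp: gh upd_pair_def fin_mono_iff intro!: mono_comp_fun_upd)
qed

lemma card_factorizations_mono_comp:
  assumes "fin_mono f" "is_comp u" "is_comp v"
  shows "card {gh \<in> factorizations f. mono_comp (fst gh) = u \<and> mono_comp (snd gh) = v}
       = count_list (qshuffles u v) (mono_comp f)"
  using assms
proof (induction f arbitrary: u v rule: fin_mono_min_induct)
  case zero
  have comp0: "mono_comp (\<lambda>_. NN 0) = []"
    by (simp add: mono_comp_def mono_supp_def)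
  then have "{gh \<in> factorizations (\<lambda>_. NN 0). mono_comp (fst gh) = u \<and> mono_comp (snd gh) = v}
      = (if u = [] \<and> v = [] then {(\<lambda>_. NN 0, \<lambda>_. NN 0)} else {})"
    by (auto simp: factorizations_const_NN0)
  then show ?case
    by (simp add: comp0 count_qshuffles_Nil)
next
  case (upd f p0 x)
  have f_p0: "f p0 = NN 0"
    using upd.hyps(2) by (auto simp: mono_supp_def)
  let ?C = "\<lambda>gh. mono_comp (fst gh) = u \<and> mono_comp (snd gh) = v"
  let ?B = "\<lambda>(p, q). {gh \<in> factorizations f. match_nz p u \<and> match_nz q v
      \<and> mono_comp (fst gh) = rest_nz p u \<and> mono_comp (snd gh) = rest_nz q v}"
  have "{gh \<in> factorizations (f(p0 := x)). ?C gh}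
      = upd_pair p0 ` {y \<in> tadd_decomps x \<times> factorizations f. ?C (upd_pair p0 y)}"
    unfolding factorizations_fun_upd[of f p0, OF f_p0] by auto
  then have "card {gh \<in> factorizations (f(p0 := x)). ?C gh}
      = card (upd_pair p0 ` {y \<in> tadd_decomps x \<times> factorizations f. ?C (upd_pair p0 y)})"
    by simp
  also have "\<dots> = card {y \<in> tadd_decomps x \<times> factorizations f. ?C (upd_pair p0 y)}"
    by (intro card_image inj_on_subset[OF inj_on_upd_pair[of f p0, OF f_p0]]) auto
  also have "{y \<in> tadd_decomps x \<times> factorizations f. ?C (upd_pair p0 y)} = Sigma (tadd_decomps x) ?B"
    using mono_comp_upd_pair[OF _ upd.hyps(2)] by (auto simp: cons_nz_eq_iff)
  also have "card (Sigma (tadd_decomps x) ?B) = (\<Sum>pq\<in>tadd_decomps x. card (?B pq))"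
    using finite_factorizations[OF upd.hyps(1)] by (intro card_SigmaI) (auto simp: finite_tadd_decomps)
  also have "\<dots> = (\<Sum>(p, q)\<in>tadd_decomps x. if match_nz p u \<and> match_nz q v
      then count_list (qshuffles (rest_nz p u) (rest_nz q v)) (mono_comp f) else 0)"
    using upd.IH[OF is_comp_rest_nz[OF upd.prems(1)] is_comp_rest_nz[OF upd.prems(2)]]
    by (intro sum.cong) auto
  also have "\<dots> = count_list (qshuffles u v) (mono_comp (f(p0 := x)))"
    using upd.hyps mono_comp_fun_upd[of f p0 x] count_qshuffles_Cons[OF upd.prems(1,2) upd.hyps(3)]
    by (simp add: fin_mono_iff cons_nz_def)
  finally show ?case .
qed

definition qshuffle_prod :: "(ntil list \<Rightarrow> 'k::comm_ring_1) \<Rightarrow> (ntil list \<Rightarrow> 'k) \<Rightarrow> ntil list \<Rightarrow> 'k" where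
  "qshuffle_prod a b w = (\<Sum>(u, v)\<in>supp a \<times> supp b. a u * b v * of_nat (count_list (qshuffles u v) w))"

lemma mult_eq_sum_supp_times:
  fixes a :: "'a \<Rightarrow> 'k::comm_ring_1" and b :: "'b \<Rightarrow> 'k"
  assumes "finite (supp a)" "finite (supp b)"
  shows "a x * b y = (\<Sum>uv\<in>supp a \<times> supp b. if x = fst uv \<and> y = snd uv then a (fst uv) * b (snd uv) else 0)"
proof -
  have "(\<Sum>uv\<in>supp a \<times> supp b. if x = fst uv \<and> y = snd uv then a (fst uv) * b (snd uv) else 0)
      = (\<Sum>uv\<in>supp a \<times> supp b. if uv = (x, y) then a (fst uv) * b (snd uv) else 0)"
    by (intro sum.cong) auto
  also have "\<dots> = a x * b y"
    using assms by (simp add: sum.delta' supp_def)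
  finally show ?thesis ..
qed

lemma ps_mult_realize:
  assumes a: "a \<in> Wvec" and b: "b \<in> Wvec"
  shows "ps_mult (realize a) (realize b) f = (if fin_mono f then qshuffle_prod a b (mono_comp f) else 0)"
proof (cases "fin_mono f")
  case False
  then show ?thesis
    using factorizations_not_fin_mono by (simp add: ps_mult_def factorizations_def[symmetric])
next
  case True
  let ?A = "supp a \<times> supp b"
  let ?C = "\<lambda>gh uv. mono_comp (fst gh) = fst uv \<and> mono_comp (snd gh) = snd uv"
  have "ps_mult (realize a) (realize b) f = (\<Sum>gh\<in>factorizations f. a (mono_comp (fst gh)) * b (mono_comp (snd gh)))"
    unfolding ps_mult_def factorizations_def[symmetric]
    by (intro sum.cong) (auto simp: realize_eq[OF a] realize_eq[OF b] factorizations_def)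
  also have "\<dots> = (\<Sum>gh\<in>factorizations f. \<Sum>uv\<in>?A. if ?C gh uv then a (fst uv) * b (snd uv) else 0)"
    using a b by (intro sum.cong refl mult_eq_sum_supp_times Wvec_finite_supp)
  also have "\<dots> = (\<Sum>uv\<in>?A. a (fst uv) * b (snd uv) * of_nat (card {gh \<in> factorizations f. ?C gh uv}))"
    using finite_factorizations[OF True]
    by (subst sum.swap) (simp add: sum.If_cases Int_def mult.commute)
  also have "\<dots> = qshuffle_prod a b (mono_comp f)"
    unfolding qshuffle_prod_def using True Wvec_supp_is_comp[OF a] Wvec_supp_is_comp[OF b]
    by (intro sum.cong) (auto simp: card_factorizations_mono_comp)
  finally show ?thesis
    using True by simp
qed

lemma qshuffle_prod_eq:
  "qshuffle_prod a b = (\<lambda>w. \<Sum>uv\<in>supp a \<times> supp b. a (fst uv) * b (snd uv) * of_nat (count_list (qshuffles (fst uv) (snd uv)) w))"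
  by (simp add: fun_eq_iff qshuffle_prod_def split_def)

lemma phi_qshuffle_prod:
  assumes a: "a \<in> Wvec" and b: "b \<in> Wvec"
  shows "phi (qshuffle_prod a b) = qshuffle_prod (phi a) (phi b)"
proof
  fix w
  let ?count = "\<lambda>u v. of_nat (count_list (qshuffles u v) w)"
  have fin: "finite (supp a \<times> supp b)"
    using a b by (simp add: Wvec_finite_supp)
  have "phi (qshuffle_prod a b) w
      = (\<Sum>uv\<in>supp a \<times> supp b. a (fst uv) * b (snd uv) * (\<Sum>d\<leftarrow>qshuffles (fst uv) (snd uv). phi_basis d w))"
    unfolding qshuffle_prod_eq by (rule phi_count_list_combination[OF fin])
  also have "\<dots> = (\<Sum>uv\<in>supp a \<times> supp b.
      a (fst uv) * b (snd uv) * (phi_coeff (fst uv) * phi_coeff (snd uv) * ?count (bar (fst uv)) (bar (snd uv))))"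
    using Wvec_supp_is_comp[OF a] Wvec_supp_is_comp[OF b]
    by (intro sum.cong) (auto simp: sum_phi_basis_qshuffles)
  also have "\<dots> = (\<Sum>u\<in>supp a. a u * phi_coeff u * (\<Sum>v\<in>supp b. b v * phi_coeff v * ?count (bar u) (bar v)))"
    by (simp add: sum.cartesian_product split_def sum_distrib_left mult_ac)
  also have "\<dots> = (\<Sum>u\<in>supp (phi a). phi a u * (\<Sum>v\<in>supp (phi b). phi b v * ?count u v))"
    by (simp add: sum_supp_phi[OF a] sum_supp_phi[OF b])
  also have "\<dots> = qshuffle_prod (phi a) (phi b) w"
    by (simp add: qshuffle_prod_def sum.cartesian_product[symmetric] sum_distrib_left mult.assoc)
  finally show "phi (qshuffle_prod a b) w = qshuffle_prod (phi a) (phi b) w" .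
qed

lemma phi_cong_is_comp:
  assumes "finite (supp a)" "finite (supp b)" "\<And>x. is_comp x \<Longrightarrow> a x = b x"
  shows "phi a = phi b"
proof
  fix w
  have non_comp: "phi_basis x w = 0" if "\<not> is_comp x" for x
    using that by (simp add: phi_basis_def in_C_N_def)
  have "(\<Sum>x\<in>supp a \<union> supp b. a x * phi_basis x w) = (\<Sum>x\<in>supp a \<union> supp b. b x * phi_basis x w)"
    by (intro sum.cong refl) (metis non_comp assms(3) mult_zero_right)
  then show "phi a w = phi b w"
    unfolding phi_def using assms(1,2) by (simp add: sum_supp_superset[of "supp a \<union> supp b"])
qed

lemma realize_phi_mult:
  assumes a: "a \<in> Wvec" and b: "b \<in> Wvec" and c: "c \<in> Wvec"
    and prod: "realize c = ps_mult (realize a) (realize b)"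
  shows "realize (phi c) = ps_mult (realize (phi a)) (realize (phi b))"
proof -
  have "c x = qshuffle_prod a b x" if "is_comp x" for x
    using fun_cong[OF prod, of "expo [0..<length x] x"] mono_comp_expo_upt[OF that]
    by (simp add: realize_eq[OF c] ps_mult_realize[OF a b])
  moreover have "finite (supp (qshuffle_prod a b))"
    unfolding qshuffle_prod_eq using a b
    by (intro finite_subset[OF supp_count_list_combination]) (auto simp: Wvec_finite_supp)
  ultimately have "phi c = qshuffle_prod (phi a) (phi b)"
    using phi_cong_is_comp Wvec_finite_supp[OF c] phi_qshuffle_prod[OF a b] by metis
  moreover have "phi a \<in> Wvec" "phi b \<in> Wvec" "phi c \<in> Wvec"
    using a b c phi_in_Qvec Qvec_subset_Wvec by blast+
  ultimately show ?thesis
    by (simp add: fun_eq_iff realize_eq ps_mult_realize)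
qed

theorem theorem3p8:
  fixes k_witness :: "'k::comm_ring_1"
  assumes contains_Q: "\<forall>n::nat. n \<noteq> 0 \<longrightarrow> (\<exists>y::'k. of_nat n * y = 1)"
  shows
    \<comment> \<open>phi maps WCQSym into QSym\<close>
    "(\<forall>a \<in> (Wvec :: (ntil list \<Rightarrow> 'k) set). phi a \<in> Qvec)
     \<comment> \<open>surjective\<close>
     \<and> (\<forall>q \<in> (Qvec :: (ntil list \<Rightarrow> 'k) set). \<exists>a \<in> Wvec. phi a = q)
     \<comment> \<open>multiplicative (product = power series product) and unital\<close>
     \<and> (\<forall>a \<in> (Wvec :: (ntil list \<Rightarrow> 'k) set). \<forall>b \<in> Wvec. \<forall>c \<in> Wvec.
          realize c = ps_mult (realize a) (realize b) \<longrightarrow>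
          realize (phi c) = ps_mult (realize (phi a)) (realize (phi b)))
     \<and> phi (unit_vec :: ntil list \<Rightarrow> 'k) = unit_vec
     \<comment> \<open>compatible with coproduct, counit and antipode\<close>
     \<and> (\<forall>a \<in> (Wvec :: (ntil list \<Rightarrow> 'k) set). phi2 (coprod a) = coprod (phi a))
     \<and> (\<forall>a \<in> (Wvec :: (ntil list \<Rightarrow> 'k) set). counit (phi a) = counit a)
     \<and> (\<forall>a \<in> (Wvec :: (ntil list \<Rightarrow> 'k) set). antipode (phi a) = phi (antipode a))"
proof -
  have "\<exists>a \<in> Wvec. phi a = q" if "q \<in> Qvec" for q :: "ntil list \<Rightarrow> 'k"
    using that Qvec_subset_Wvec phi_Qvec_id by blast
  then show ?thesis
    by (simp add: phi_in_Qvec realize_phi_mult phi_unit_vec phi_coprod counit_phi antipode_phi)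
qed

end
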